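(* Let $f\in\mathcal G$ have compact support in $[0,\infty)$, and suppose $f$ belongs to the closure in $L_2(0,\infty)$ of $\mathcal B(Pf)$. Then every zero $s$ of the Riemann zeta function with $1/2<\Re s<1$ is a zero of the Mellin transform $\hat f$, i.e. $\{s:\zeta(s)=0,\ 1/2<\Re s<1\}\subset\{s:\hat f(s)=0,\ 1/2<\Re s<1\}$.
   Context: A good kernel is a continuously differentiable function $f:[0,\infty)\to\mathbb C$ with $f(x)\to0$ as $x\to\infty$, $f\in L_1(0,\infty)$, and $\int_0^\infty t|f'(t)|\,dt<\infty$; $\mathcal G$ denotes the class of good kernels. For $f\in\mathcal G$ the Müntz operator is $Pf(x):=\sum_{n=1}^\infty f(nx)-\frac1x\int_0^\infty f(t)\,dt$, defined for a.e. $x>0$. For $\lambda>0$, $K_\lambda g(x):=g(\lambda x)$. $\mathcal B(g)$ is the linear span of $\{K_n g:n\in\mathbb N\}$. The Mellin transform is $\hat f(s):=\int_0^\infty t^{s-1}f(t)\,dt$, which for $f\in\mathcal G$ converges absolutely for $0<\Re s<1$. *)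

theory Defs
  imports "HOL-Analysis.Analysis"
begin

definition good_kernel :: "(real \<Rightarrow> complex) \<Rightarrow> bool" where
  "good_kernel f \<longleftrightarrow>
     (\<exists>f'. (\<forall>x\<ge>0. (f has_vector_derivative f' x) (at x within {0..}))
         \<and> continuous_on {0..} f'
         \<and> (\<lambda>t. complex_of_real t * f' t) absolutely_integrable_on {0..})
     \<and> (f \<longlongrightarrow> 0) at_top
     \<and> f absolutely_integrable_on {0..}"

definition muntz :: "(real \<Rightarrow> complex) \<Rightarrow> real \<Rightarrow> complex" where
  "muntz f x = (\<Sum>n. f (real (Suc n) * x)) - complex_of_real (1 / x) * integral {0..} f"

definition dil :: "real \<Rightarrow> (real \<Rightarrow> complex) \<Rightarrow> real \<Rightarrow> complex" where
  "dil l g x = g (l * x)"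

definition Bspan :: "(real \<Rightarrow> complex) \<Rightarrow> (real \<Rightarrow> complex) set" where
  "Bspan g = {h. \<exists>N c. h = (\<lambda>x. \<Sum>n\<in>{1..N}. c n * dil (real n) g x)}"

definition in_L2_closure :: "(real \<Rightarrow> complex) \<Rightarrow> (real \<Rightarrow> complex) set \<Rightarrow> bool" where
  "in_L2_closure f S \<longleftrightarrow>
     (\<forall>e>0. \<exists>h\<in>S. (\<lambda>x. (norm (f x - h x))\<^sup>2) integrable_on {0<..}
                 \<and> integral {0<..} (\<lambda>x. (norm (f x - h x))\<^sup>2) < e)"

definition mellin :: "(real \<Rightarrow> complex) \<Rightarrow> complex \<Rightarrow> complex" where
  "mellin f s = integral {0<..} (\<lambda>t. complex_of_real t powr (s - 1) * f t)"

text \<open>Riemann zeta function on Re s > 0, s not a zero of 1 - 2^(1-s), via the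
  (analytic-continuation) identity zeta(s) = eta(s) / (1 - 2^(1-s)),
  with the Dirichlet eta series, convergent for Re s > 0.\<close>
definition zeta :: "complex \<Rightarrow> complex" where
  "zeta s = (\<Sum>n. (-1) ^ n / of_nat (Suc n) powr s) / (1 - 2 powr (1 - s))"

end

(* For 0 < Re s < 1 the Mellin transform of Pf at s is zeta(s) times that of f (Muntz's formula).
   With F the primitive of f, the functions sum_{n<=N} f(nx) - F(Nx)/x converge pointwise to Pf,
   are dominated uniformly in N (Lipschitz continuity of f near 0, decay like 1/x beyond the
   support), and have Mellin transforms mellin f s * (sum_{n<=N} n^-s - N^(1-s)/(1-s)), where the
   bracket tends to zeta(s).
   Hence at a zero s of zeta every h in B(Pf) has vanishing Mellin transform at s, so the Mellin
   transform of f at s equals that of f - h. Beyond the support of f, f - h is a multiple of 1/x;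
   for Re s > 1/2 the weights x^(Re s - 1) on (0,R) and x^(Re s - 2) on (R,oo) are square
   integrable, so Cauchy-Schwarz bounds the Mellin transform of f at s by a multiple of the
   L2 distance from f to h, which can be made arbitrarily small. *)

theory Submission
  imports Defs "HOL-Probability.Characteristic_Functions"
begin

lemma norm_of_real_powr: "0 \<le> x \<Longrightarrow> norm (complex_of_real x powr z) = x powr Re z"
  by (simp add: norm_powr_real_powr)

lemma of_real_mult_powr:
  "0 \<le> a \<Longrightarrow> 0 \<le> b \<Longrightarrow> (complex_of_real a * of_real b) powr z = of_real a powr z * of_real b powr z"
  by (simp add: powr_times_real)

lemma has_vector_derivative_of_real_powr:
  assumes "0 < x"
  shows "((\<lambda>t. complex_of_real t powr a) has_vector_derivative a * of_real x powr (a - 1)) (at x)"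
proof -
  have "((\<lambda>z. z powr a) has_field_derivative a * of_real x powr (a - 1)) (at (complex_of_real x))"
    using assms by (intro has_field_derivative_powr) (auto simp: complex_nonpos_Reals_iff)
  from field_vector_diff_chain_at[OF has_vector_derivative_of_real[OF DERIV_ident] this]
  show ?thesis by (simp add: o_def)
qed

lemma integrable_powr_majorant:
  fixes A B \<sigma> R :: real
  assumes "0 < \<sigma>" "\<sigma> < 1" "0 < R"
  shows "(\<lambda>x. x powr (\<sigma> - 1) * (if x < R then A else B / x)) integrable_on {0<..}"
proof -
  have "(\<lambda>x. A * x powr (\<sigma> - 1)) integrable_on {0<..<R}"
    using integrable_on_powr_from_0[of "\<sigma> - 1" R] assms
    by (intro integrable_on_mult_right) (simp add: integrable_on_open_interval_real)
  then have head: "(\<lambda>x. if x \<in> {..<R} then A * x powr (\<sigma> - 1) else 0) integrable_on {0<..}"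
    unfolding integrable_restrict_Int by (simp add: Int_commute greaterThanLessThan_eq)
  have "(\<lambda>x. B * x powr (\<sigma> - 2)) integrable_on {R..}"
    using has_integral_powr_to_inf[of "\<sigma> - 2" R] assms
    by (intro integrable_on_mult_right) (auto simp: integrable_on_def)
  moreover have "{R..} \<inter> {0<..} = {R..}"
    using assms by auto
  ultimately have tail: "(\<lambda>x. if x \<in> {R..} then B * x powr (\<sigma> - 2) else 0) integrable_on {0<..}"
    unfolding integrable_restrict_Int by simp
  show ?thesis
  proof (rule integrable_eq[OF integrable_add[OF head tail]])
    fix x :: real assume "x \<in> {0<..}"
    then show "(if x \<in> {..<R} then A * x powr (\<sigma> - 1) else 0) + (if x \<in> {R..} then B * x powr (\<sigma> - 2) else 0)
        = x powr (\<sigma> - 1) * (if x < R then A else B / x)"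
      by (auto simp: powr_diff field_simps power2_eq_square)
  qed
qed

lemma continuous_bounded_by_integrable_imp_absolutely_integrable:
  fixes h :: "real \<Rightarrow> complex"
  assumes "continuous_on {0<..} h" "g integrable_on {0<..}" "\<And>x. 0 < x \<Longrightarrow> norm (h x) \<le> g x"
  shows "h absolutely_integrable_on {0<..}"
  by (rule measurable_bounded_by_integrable_imp_absolutely_integrable[OF
        continuous_imp_measurable_on_sets_lebesgue[OF assms(1)] _ assms(2)]) (use assms in auto)

lemma integral_deriv_eq_0_if_vanishing_at_0_and_infinity:
  fixes G g :: "real \<Rightarrow> complex"
  assumes g: "g absolutely_integrable_on {0<..}"
    and deriv: "\<And>x. 0 < x \<Longrightarrow> (G has_vector_derivative g x) (at x)"
    and cont: "\<And>x. 0 < x \<Longrightarrow> isCont g x"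
    and "(G \<longlongrightarrow> 0) (at_right 0)" "(G \<longlongrightarrow> 0) at_top"
  shows "integral {0<..} g = 0"
proof -
  have pos_reals: "einterval 0 \<infinity> = {0<..}"
    by (auto simp: einterval_def)
  have "(\<lambda>x. indicator {0<..} x *\<^sub>R g x) \<in> borel_measurable borel"
    by (intro borel_measurable_continuous_on_indicator continuous_at_imp_continuous_on) (use cont in auto)
  then have borel_integrable: "set_integrable lborel (einterval 0 \<infinity>) g"
    using g unfolding pos_reals set_integrable_def by (simp add: integrable_completion)
  have "(LBINT x=0..\<infinity>. g x) = 0 - 0"
    by (rule interval_integral_FTC_integrable[OF _ _ _ borel_integrable])
       (use assms in \<open>auto simp: zero_ereal_def ereal_tendsto_simps\<close>)
  then show ?thesis
    using set_borel_integral_eq_integral(2)[OF borel_integrable]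
    by (simp add: interval_lebesgue_integral_def pos_reals)
qed

lemma
  fixes H :: "real \<Rightarrow> complex"
  assumes H: "H absolutely_integrable_on {0<..}" and n: "0 < n"
  shows absolutely_integrable_dilation: "(\<lambda>x. H (n * x)) absolutely_integrable_on {0<..}"
    and integral_dilation: "integral {0<..} (\<lambda>x. H (n * x)) = integral {0<..} H / of_real n"
proof -
  have "(\<lambda>x. n * x) ` {0<..} = {0<..}"
    using n by (auto simp: image_iff intro!: bexI[where x = "_ / n"])
  moreover have "(\<lambda>x. \<bar>n\<bar> *\<^sub>R H (n * x)) absolutely_integrable_on {0<..}
        \<and> integral {0<..} (\<lambda>x. \<bar>n\<bar> *\<^sub>R H (n * x)) = integral {0<..} H
      \<longleftrightarrow> H absolutely_integrable_on (\<lambda>x. n * x) ` {0<..}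
        \<and> integral ((\<lambda>x. n * x) ` {0<..}) H = integral {0<..} H"
    by (rule has_absolute_integral_change_of_variables_real)
       (use n in \<open>auto intro!: derivative_eq_intros inj_onI\<close>)
  ultimately have scaled: "(\<lambda>x. n *\<^sub>R H (n * x)) absolutely_integrable_on {0<..}"
      "integral {0<..} (\<lambda>x. n *\<^sub>R H (n * x)) = integral {0<..} H"
    using H n by auto
  have "(\<lambda>x. (1 / n) *\<^sub>R (n *\<^sub>R H (n * x))) absolutely_integrable_on {0<..}"
    by (rule absolutely_integrable_scaleR_left[OF scaled(1)])
  then show "(\<lambda>x. H (n * x)) absolutely_integrable_on {0<..}"
    using n by simp
  show "integral {0<..} (\<lambda>x. H (n * x)) = integral {0<..} H / of_real n"
    using scaled(2) n by (simp add: scaleR_conv_of_real field_simps)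
qed

section \<open>Mellin transforms\<close>

definition mellin_integrable :: "(real \<Rightarrow> complex) \<Rightarrow> complex \<Rightarrow> bool" where
  "mellin_integrable g s \<longleftrightarrow>
     (\<lambda>t. complex_of_real t powr (s - 1) * g t) absolutely_integrable_on {0<..}"

lemma mellin_integrable_integrable:
  "mellin_integrable g s \<Longrightarrow> (\<lambda>t. complex_of_real t powr (s - 1) * g t) integrable_on {0<..}"
  unfolding mellin_integrable_def using set_lebesgue_integral_eq_integral(1) by blast

lemma mellin_integrable_if_bounded:
  fixes g :: "real \<Rightarrow> complex"
  assumes "continuous_on {0<..} g" "0 < Re s" "Re s < 1" "0 < R"
    and bound: "\<And>x. 0 < x \<Longrightarrow> norm (g x) \<le> (if x < R then A else B / x)"
  shows "mellin_integrable g s"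
  unfolding mellin_integrable_def
proof (rule continuous_bounded_by_integrable_imp_absolutely_integrable)
  show "continuous_on {0<..} (\<lambda>t. complex_of_real t powr (s - 1) * g t)"
    using assms(1) by (intro continuous_intros) auto
  show "(\<lambda>x. x powr (Re s - 1) * (if x < R then A else B / x)) integrable_on {0<..}"
    by (rule integrable_powr_majorant) (use assms in auto)
  fix x :: real assume "0 < x"
  then show "norm (complex_of_real x powr (s - 1) * g x) \<le> x powr (Re s - 1) * (if x < R then A else B / x)"
    using bound[of x] by (simp add: norm_mult norm_of_real_powr mult_left_mono)
qed

lemma
  assumes g: "mellin_integrable g s" and n: "0 < n"
  shows mellin_integrable_dilation: "mellin_integrable (\<lambda>x. g (n * x)) s"
    and mellin_dilation: "mellin (\<lambda>x. g (n * x)) s = mellin g s / of_real n powr s"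
proof -
  define H where "H y = complex_of_real y powr (s - 1) * g y" for y
  have H: "H absolutely_integrable_on {0<..}"
    using g unfolding H_def[abs_def] mellin_integrable_def .
  have integrand: "complex_of_real x powr (s - 1) * g (n * x) = of_real n powr (1 - s) * H (n * x)"
    if "0 < x" for x
    using n that by (simp add: H_def of_real_mult_powr powr_diff field_simps)
  have "(\<lambda>x. of_real n powr (1 - s) * H (n * x)) absolutely_integrable_on {0<..}"
    by (intro set_integrable_mult_right absolutely_integrable_dilation[OF H n])
  then show "mellin_integrable (\<lambda>x. g (n * x)) s"
    unfolding mellin_integrable_def by (rule set_integrable_cong[THEN iffD2, rotated -1]) (auto simp: integrand)
  have "mellin (\<lambda>x. g (n * x)) s = integral {0<..} (\<lambda>x. of_real n powr (1 - s) * H (n * x))"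
    unfolding mellin_def by (rule integral_cong) (simp add: integrand)
  also have "\<dots> = of_real n powr (1 - s) * (mellin g s / of_real n)"
    using integral_dilation[OF H n] by (simp add: H_def[abs_def] mellin_def)
  also have "\<dots> = mellin g s / of_real n powr s"
    using n by (simp add: powr_diff field_simps)
  finally show "mellin (\<lambda>x. g (n * x)) s = mellin g s / of_real n powr s" .
qed

lemma
  assumes "mellin_integrable g s"
  shows mellin_integrable_cmult: "mellin_integrable (\<lambda>x. c * g x) s"
    and mellin_cmult: "mellin (\<lambda>x. c * g x) s = c * mellin g s"
  using set_integrable_mult_right[OF assms[unfolded mellin_integrable_def], of c]
  by (simp_all add: mellin_integrable_def mellin_def mult.left_commute)

lemma
  assumes "mellin_integrable g s" "mellin_integrable h s"
  shows mellin_integrable_diff: "mellin_integrable (\<lambda>x. g x - h x) s"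
    and mellin_diff: "mellin (\<lambda>x. g x - h x) s = mellin g s - mellin h s"
  using set_integral_diff(1)[OF assms[unfolded mellin_integrable_def]]
    integral_diff[OF assms[THEN mellin_integrable_integrable]]
  by (simp_all add: mellin_integrable_def mellin_def right_diff_distrib)

lemma
  assumes "finite I" "\<And>i. i \<in> I \<Longrightarrow> mellin_integrable (g i) s"
  shows mellin_integrable_sum: "mellin_integrable (\<lambda>x. \<Sum>i\<in>I. g i x) s"
    and mellin_sum: "mellin (\<lambda>x. \<Sum>i\<in>I. g i x) s = (\<Sum>i\<in>I. mellin (g i) s)"
  using absolutely_integrable_sum[OF assms(1) assms(2)[unfolded mellin_integrable_def]]
    integral_sum[OF assms(1) assms(2)[THEN mellin_integrable_integrable]]
  by (simp_all add: mellin_integrable_def mellin_def sum_distrib_left)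

lemma
  fixes g :: "real \<Rightarrow> complex"
  shows mellin_integrable_divide_of_real:
      "mellin_integrable (\<lambda>x. g x / of_real x) s \<longleftrightarrow> mellin_integrable g (s - 1)"
    and mellin_divide_of_real: "mellin (\<lambda>x. g x / of_real x) s = mellin g (s - 1)"
proof -
  have integrand: "complex_of_real x powr (s - 1) * g x / of_real x = of_real x powr (s - 2) * g x"
    if "0 < x" for x
    using that by (simp add: powr_diff power2_eq_square)
  show "mellin_integrable (\<lambda>x. g x / of_real x) s \<longleftrightarrow> mellin_integrable g (s - 1)"
    unfolding mellin_integrable_def by (rule set_integrable_cong) (auto simp: integrand)
  show "mellin (\<lambda>x. g x / of_real x) s = mellin g (s - 1)"
    unfolding mellin_def by (rule integral_cong) (simp add: integrand)
qed

lemma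
  assumes g: "mellin_integrable g s" and h: "h \<in> Bspan g"
  shows mellin_integrable_Bspan: "mellin_integrable h s"
    and mellin_Bspan_eq_0: "mellin g s = 0 \<Longrightarrow> mellin h s = 0"
proof -
  from h obtain N c where h_eq: "h = (\<lambda>x. \<Sum>n\<in>{1..N}. c n * g (real n * x))"
    unfolding Bspan_def dil_def by blast
  have dilate: "mellin_integrable (\<lambda>x. c n * g (real n * x)) s"
      "mellin (\<lambda>x. c n * g (real n * x)) s = c n * (mellin g s / of_nat n powr s)"
    if "0 < n" for n
    using that mellin_integrable_dilation[OF g] mellin_dilation[OF g]
    by (auto intro!: mellin_integrable_cmult simp: mellin_cmult)
  show "mellin_integrable h s"
    unfolding h_eq by (intro mellin_integrable_sum dilate) auto
  have "mellin h s = (\<Sum>n\<in>{1..N}. c n * (mellin g s / of_nat n powr s))"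
    unfolding h_eq by (subst mellin_sum) (auto intro!: sum.cong simp: dilate)
  then show "mellin h s = 0" if "mellin g s = 0"
    using that by simp
qed

section \<open>The zeta function as a limit of corrected partial sums\<close>

lemma of_nat_mult_powr: "(of_nat (a * b) :: complex) powr z = of_nat a powr z * of_nat b powr z"
  using of_real_mult_powr[of "real a" "real b" z] by simp

lemma alternating_sum_even:
  "(\<Sum>n<2 * N. (-1) ^ n / of_nat (Suc n) powr s)
     = (\<Sum>n=1..2 * N. 1 / of_nat n powr s) - 2 powr (1 - s) * (\<Sum>n=1..N. 1 / of_nat n powr s :: complex)"
proof (induction N)
  case (Suc N)
  have "(of_nat (2 * Suc N) :: complex) powr s = 2 powr s * of_nat (Suc N) powr s"
    using of_nat_mult_powr[of 2 "Suc N" s] by simp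
  then have "2 powr (1 - s) * (1 / of_nat (Suc N) powr s) = 2 * (1 / of_nat (Suc (Suc (2 * N))) powr s :: complex)"
    by (simp add: powr_diff field_simps)
  with Suc.IH show ?case
    by (simp add: algebra_simps)
qed simp

lemma zeta_eq_lim:
  assumes s: "0 < Re s" "Re s < 1"
    and lim: "(\<lambda>N. (\<Sum>n=1..N. 1 / of_nat n powr s) - of_nat N powr (1 - s) / (1 - s)) \<longlonglongrightarrow> L"
  shows "zeta s = L"
proof -
  define A where "A N = (\<Sum>n=1..N. 1 / of_nat n powr s) - of_nat N powr (1 - s) / (1 - s)" for N
  define E where "E M = (\<Sum>n<M. (-1) ^ n / of_nat (Suc n) powr s :: complex)" for M
  have E_even: "E (2 * N) = A (2 * N) - 2 powr (1 - s) * A N" for N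
  proof -
    have "(of_nat (2 * N) :: complex) powr (1 - s) = 2 powr (1 - s) * of_nat N powr (1 - s)"
      using of_nat_mult_powr[of 2 N "1 - s"] by simp
    then show ?thesis
      unfolding E_def A_def alternating_sum_even by (simp add: algebra_simps)
  qed
  have A: "A \<longlonglongrightarrow> L"
    using lim unfolding A_def[abs_def] .
  moreover have "(\<lambda>N. A (2 * N)) \<longlonglongrightarrow> L"
    by (rule filterlim_compose[OF A]) (simp add: filterlim_subseq strict_mono_def)
  ultimately have even: "(\<lambda>N. E (2 * N)) \<longlonglongrightarrow> L - 2 powr (1 - s) * L"
    unfolding E_even by (intro tendsto_intros)
  have "(\<lambda>N. 1 / (of_nat (Suc (2 * N)) :: complex) powr s) \<longlonglongrightarrow> 0"
    using tendsto_neg_powr_complex_of_nat[of "\<lambda>N. Suc (2 * N)" sequentially "- s"] s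
    by (simp add: powr_minus_divide filterlim_subseq strict_mono_def)
  from tendsto_add[OF even this] have odd: "(\<lambda>N. E (2 * N + 1)) \<longlonglongrightarrow> L - 2 powr (1 - s) * L"
    by (simp add: E_def)
  have "(\<lambda>n. (-1) ^ n / of_nat (Suc n) powr s :: complex) sums ((1 - 2 powr (1 - s)) * L)"
    using limseq_even_odd[OF even odd] unfolding sums_def E_def by (simp add: algebra_simps)
  moreover have "norm ((2::complex) powr (1 - s)) \<noteq> 1"
    using s gr_one_powr[of 2 "1 - Re s"] by (simp add: norm_powr_real_powr)
  then have "1 - (2::complex) powr (1 - s) \<noteq> 0"
    by auto
  ultimately show ?thesis
    unfolding zeta_def by (simp add: sums_unique[symmetric])
qed

section \<open>An L2 bound for Mellin transforms\<close>

lemma mult_le_weighted_squares: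
  fixes a b d :: real
  assumes "0 < d"
  shows "a * b \<le> (d * a\<^sup>2 + b\<^sup>2 / d) / 2"
proof -
  have "0 \<le> (d * a - b)\<^sup>2 / d"
    using assms by simp
  then show ?thesis
    using assms by (simp add: power2_eq_square field_simps)
qed

lemma norm_integral_powr_mult_le:
  fixes g :: "real \<Rightarrow> complex"
  assumes v: "(\<lambda>x. complex_of_real x powr (s - 1) * g x) integrable_on {0<..<R}"
    and w: "(\<lambda>x. (norm (g x))\<^sup>2) integrable_on {0<..<R}"
    and s: "1/2 < Re s" and R: "0 < R" and d: "0 < d"
  shows "norm (integral {0<..<R} (\<lambda>x. complex_of_real x powr (s - 1) * g x))
    \<le> (d * (R powr (2 * Re s - 1) / (2 * Re s - 1)) + integral {0<..<R} (\<lambda>x. (norm (g x))\<^sup>2) / d) / 2"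
proof -
  have "((\<lambda>x. x powr (2 * Re s - 2)) has_integral R powr (2 * Re s - 1) / (2 * Re s - 1)) {0..R}"
    using has_integral_powr_from_0[of "2 * Re s - 2" R] s R by (simp add: algebra_simps)
  then have "((\<lambda>x. x powr (2 * Re s - 2)) has_integral R powr (2 * Re s - 1) / (2 * Re s - 1)) {0<..<R}"
    by (simp add: has_integral_Icc_iff_Ioo)
  then have majorant: "((\<lambda>x. (d * x powr (2 * Re s - 2) + (norm (g x))\<^sup>2 / d) / 2) has_integral
      (d * (R powr (2 * Re s - 1) / (2 * Re s - 1)) + integral {0<..<R} (\<lambda>x. (norm (g x))\<^sup>2) / d) / 2) {0<..<R}"
    by (intro has_integral_divide has_integral_add has_integral_mult_right integrable_integral w)
  show ?thesis
  proof (rule integral_norm_bound_integral[OF v _ _, THEN order_trans])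
    show "(\<lambda>x. (d * x powr (2 * Re s - 2) + (norm (g x))\<^sup>2 / d) / 2) integrable_on {0<..<R}"
      using majorant by blast
    fix x :: real assume "x \<in> {0<..<R}"
    then have "norm (complex_of_real x powr (s - 1) * g x) = x powr (Re s - 1) * norm (g x)"
      by (simp add: norm_mult norm_of_real_powr)
    also have "\<dots> \<le> (d * (x powr (Re s - 1))\<^sup>2 + (norm (g x))\<^sup>2 / d) / 2"
      by (rule mult_le_weighted_squares[OF d])
    finally show "norm (complex_of_real x powr (s - 1) * g x) \<le> (d * x powr (2 * Re s - 2) + (norm (g x))\<^sup>2 / d) / 2"
      by (simp add: power2_eq_square powr_add[symmetric])
  qed (rule eq_refl[OF integral_unique[OF majorant]])
qed

lemma has_integral_norm_square_inverse:
  fixes g :: "real \<Rightarrow> complex"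
  assumes R: "0 < R" and tail: "\<And>x. R \<le> x \<Longrightarrow> g x = C / of_real x"
  shows "((\<lambda>x. (norm (g x))\<^sup>2) has_integral (norm C)\<^sup>2 / R) {R..}"
proof -
  have "((\<lambda>x. x powr (-2)) has_integral 1 / R) {R..}"
    using has_integral_powr_to_inf[of "-2" R] R by (simp add: powr_minus_divide)
  from has_integral_mult_right[OF this, of "(norm C)\<^sup>2"]
  have "((\<lambda>x. (norm C)\<^sup>2 * x powr (-2)) has_integral (norm C)\<^sup>2 / R) {R..}"
    by simp
  moreover have "(norm C)\<^sup>2 * x powr (-2) = (norm (g x))\<^sup>2" if "x \<in> {R..}" for x
    using that R by (simp add: tail norm_divide powr_minus_divide power_divide)
  ultimately show ?thesis
    by (rule has_integral_eq[rotated])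
qed

lemma norm_integral_powr_mult_tail_le:
  fixes g :: "real \<Rightarrow> complex"
  assumes v: "(\<lambda>x. complex_of_real x powr (s - 1) * g x) integrable_on {R..}"
    and tail: "\<And>x. R \<le> x \<Longrightarrow> g x = C / of_real x"
    and s: "Re s < 1" and R: "0 < R" and d: "0 < d"
  shows "norm (integral {R..} (\<lambda>x. complex_of_real x powr (s - 1) * g x))
    \<le> (d * (R * (R powr (Re s - 1) / (1 - Re s))\<^sup>2) + integral {R..} (\<lambda>x. (norm (g x))\<^sup>2) / d) / 2"
proof -
  define B where "B = R powr (Re s - 1) / (1 - Re s)"
  have "-(R powr (Re s - 2 + 1)) / (Re s - 2 + 1) = B"
    using s by (simp add: B_def divide_simps algebra_simps)
  then have "((\<lambda>x. x powr (Re s - 2)) has_integral B) {R..}"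
    using has_integral_powr_to_inf[of "Re s - 2" R] s R by simp
  then have majorant: "((\<lambda>x. norm C * x powr (Re s - 2)) has_integral norm C * B) {R..}"
    by (rule has_integral_mult_right)
  have "norm (integral {R..} (\<lambda>x. complex_of_real x powr (s - 1) * g x))
      \<le> integral {R..} (\<lambda>x. norm C * x powr (Re s - 2))"
  proof (rule integral_norm_bound_integral[OF v])
    show "(\<lambda>x. norm C * x powr (Re s - 2)) integrable_on {R..}"
      using majorant by blast
    fix x :: real assume "x \<in> {R..}"
    with R have "0 < x" "R \<le> x" by auto
    then show "norm (complex_of_real x powr (s - 1) * g x) \<le> norm C * x powr (Re s - 2)"
      by (simp add: tail norm_mult norm_divide norm_of_real_powr powr_diff power2_eq_square mult_ac)
  qed
  also have "\<dots> = norm C * B"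
    using majorant by (rule integral_unique)
  also have "norm C * B \<le> (d * (R * B\<^sup>2) + (norm C)\<^sup>2 / (R * d)) / 2"
    using mult_le_weighted_squares[of "R * d" B "norm C"] R d by (simp add: mult_ac)
  also have "(norm C)\<^sup>2 / (R * d) = integral {R..} (\<lambda>x. (norm (g x))\<^sup>2) / d"
    using integral_unique[OF has_integral_norm_square_inverse[OF R tail]] by simp
  finally show ?thesis
    unfolding B_def .
qed

lemma norm_mellin_le_L2:
  fixes g :: "real \<Rightarrow> complex"
  assumes g: "mellin_integrable g s" and s: "1/2 < Re s" "Re s < 1" and R: "0 < R"
    and tail: "\<And>x. R \<le> x \<Longrightarrow> g x = C / of_real x"
    and square: "(\<lambda>x. (norm (g x))\<^sup>2) integrable_on {0<..}"
    and d: "0 < d"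
  shows "norm (mellin g s) \<le> d * ((R powr (2 * Re s - 1) / (2 * Re s - 1) + R * (R powr (Re s - 1) / (1 - Re s))\<^sup>2) / 2)
    + integral {0<..} (\<lambda>x. (norm (g x))\<^sup>2) / d"
proof -
  define v where "v x = complex_of_real x powr (s - 1) * g x" for x
  define w where "w x = (norm (g x))\<^sup>2" for x
  have parts: "{0<..<R} \<subseteq> {0<..}" "{R..} \<subseteq> {0<..}" "{0<..<R} \<union> {R..} = {0<..}" "{0<..<R} \<inter> {R..} = {}"
    using R by auto
  have "v absolutely_integrable_on {0<..}"
    using g unfolding mellin_integrable_def v_def[abs_def] .
  then have v_parts: "v integrable_on {0<..<R}" "v integrable_on {R..}"
    using parts(1,2) by (auto intro!: set_lebesgue_integral_eq_integral(1) elim!: set_integrable_subset)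
  have w: "w integrable_on {0<..}"
    using square by (simp add: w_def[abs_def])
  then have "w absolutely_integrable_on {0<..}"
    by (rule nonnegative_absolutely_integrable_1) (simp add: w_def)
  then have w_parts: "w integrable_on {0<..<R}" "w integrable_on {R..}"
    using parts(1,2) by (auto intro!: set_lebesgue_integral_eq_integral(1) elim!: set_integrable_subset)
  have "integral {0<..<R} w \<le> integral {0<..} w" "integral {R..} w \<le> integral {0<..} w"
    by (intro integral_subset_le parts w_parts w; simp add: w_def)+
  then have "(integral {0<..<R} w + integral {R..} w) / 2 / d \<le> integral {0<..} w / d"
    using d by (intro divide_right_mono) auto
  then have w_le: "(integral {0<..<R} w / d + integral {R..} w / d) / 2 \<le> integral {0<..} w / d"
    by (simp add: add_divide_distrib)
  have "(v has_integral integral {0<..<R} v + integral {R..} v) {0<..}"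
    using has_integral_Un[OF v_parts[THEN integrable_integral]] parts by simp
  then have "norm (mellin g s) \<le> norm (integral {0<..<R} v) + norm (integral {R..} v)"
    unfolding mellin_def v_def[symmetric] by (simp add: integral_unique norm_triangle_ineq)
  also have "\<dots> \<le> (d * (R powr (2 * Re s - 1) / (2 * Re s - 1)) + integral {0<..<R} w / d) / 2
      + (d * (R * (R powr (Re s - 1) / (1 - Re s))\<^sup>2) + integral {R..} w / d) / 2"
    unfolding v_def[abs_def] w_def[abs_def]
    by (intro add_mono norm_integral_powr_mult_le norm_integral_powr_mult_tail_le)
       (use v_parts w_parts tail s R d in \<open>simp_all add: v_def[abs_def] w_def[abs_def]\<close>)
  also have "\<dots> = d * ((R powr (2 * Re s - 1) / (2 * Re s - 1) + R * (R powr (Re s - 1) / (1 - Re s))\<^sup>2) / 2)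
      + (integral {0<..<R} w / d + integral {R..} w / d) / 2"
    by (simp only: add_divide_distrib distrib_left)
  also have "\<dots> \<le> d * ((R powr (2 * Re s - 1) / (2 * Re s - 1) + R * (R powr (Re s - 1) / (1 - Re s))\<^sup>2) / 2)
      + integral {0<..} w / d"
    by (rule add_left_mono[OF w_le])
  finally show ?thesis
    unfolding w_def[abs_def] .
qed

lemma nonpos_if_le_mult_add_divide:
  fixes z Q :: real
  assumes "0 \<le> Q" and le: "\<And>d e. 0 < d \<Longrightarrow> 0 < e \<Longrightarrow> z \<le> d * Q + e / d"
  shows "z \<le> 0"
proof (rule ccontr)
  assume "\<not> z \<le> 0"
  define d where "d = z / (2 * (Q + 1))"
  have "0 < d" "d * Q \<le> z / 2"
    using \<open>\<not> z \<le> 0\<close> \<open>0 \<le> Q\<close> by (auto simp: d_def field_simps)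
  moreover have "z \<le> d * Q + (d * z / 4) / d"
    using \<open>0 < d\<close> \<open>\<not> z \<le> 0\<close> by (intro le) auto
  ultimately show False
    using \<open>\<not> z \<le> 0\<close> by simp
qed

section \<open>Muntz's formula for compactly supported Lipschitz kernels\<close>

lemma card_le_divide_add_one:
  fixes x R :: real
  assumes "0 < x" "0 < R"
  shows "real (card {n\<in>{1..N}. (real n - 1) * x < R}) \<le> R / x + 1"
proof -
  have "{n\<in>{1..N}. (real n - 1) * x < R} \<subseteq> {1..nat \<lceil>R / x\<rceil>}"
  proof safe
    fix n assume "n \<in> {1..N}" "(real n - 1) * x < R"
    then have "real n - 1 < R / x"
      using assms by (simp add: pos_less_divide_eq)
    then show "n \<in> {1..nat \<lceil>R / x\<rceil>}"
      using \<open>n \<in> {1..N}\<close> by (auto simp: le_nat_iff) linarith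
  qed
  then have "card {n\<in>{1..N}. (real n - 1) * x < R} \<le> nat \<lceil>R / x\<rceil>"
    by (metis card_atLeastAtMost card_mono diff_Suc_1 finite_atLeastAtMost)
  moreover have "real (nat \<lceil>R / x\<rceil>) \<le> R / x + 1"
    using assms of_int_ceiling_le_add_one[of "R / x"] by (simp add: of_nat_nat)
  ultimately show ?thesis
    by linarith
qed

locale compact_lipschitz_kernel =
  fixes f :: "real \<Rightarrow> complex" and L R :: real
  assumes lipschitz: "L-lipschitz_on {0..} f"
    and R_pos: "0 < R"
    and support: "\<And>x. R \<le> x \<Longrightarrow> f x = 0"
begin

lemma L_nonneg: "0 \<le> L"
  using lipschitz by (rule lipschitz_on_nonneg)

lemma continuous_on_kernel: "continuous_on {0..} f"
  using lipschitz by (rule lipschitz_on_continuous_on)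

lemma isCont_kernel: "0 < x \<Longrightarrow> isCont f x"
  using continuous_on_interior[OF continuous_on_kernel, of x] by simp

lemma norm_kernel_le: "0 \<le> x \<Longrightarrow> norm (f x) \<le> L * R"
proof (cases "x < R")
  case True
  assume "0 \<le> x"
  have "norm (f x) = norm (f x - f R)"
    by (simp add: support)
  also have "\<dots> \<le> L * norm (x - R)"
    using lipschitz_on_normD[OF lipschitz] \<open>0 \<le> x\<close> R_pos by simp
  also have "\<dots> \<le> L * R"
    using True \<open>0 \<le> x\<close> L_nonneg by (intro mult_left_mono) auto
  finally show ?thesis .
qed (use R_pos L_nonneg support in auto)

lemma integrable_on_kernel: "0 \<le> a \<Longrightarrow> f integrable_on {a..b}"
  by (rule integrable_continuous_interval) (auto intro: continuous_on_subset[OF continuous_on_kernel])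

definition primitive :: "real \<Rightarrow> complex" where
  "primitive t = integral {0..t} f"

lemma primitive_0 [simp]: "primitive 0 = 0"
  by (simp add: primitive_def)

lemma primitive_diff: "0 \<le> a \<Longrightarrow> a \<le> b \<Longrightarrow> primitive b - primitive a = integral {a..b} f"
  unfolding primitive_def
  using Henstock_Kurzweil_Integration.integral_combine[where a = 0 and c = a and b = b and f = f]
    integrable_on_kernel[of 0 b] by (simp add: algebra_simps)

lemma primitive_eq_integral: "R \<le> t \<Longrightarrow> primitive t = integral {0..} f"
proof -
  assume "R \<le> t"
  then have "(f has_integral primitive t) {0..t}"
    using integrable_integral[OF integrable_on_kernel[of 0 t]] R_pos by (simp add: primitive_def)
  then have "(f has_integral primitive t) {0..}"
    by (rule has_integral_spike_set_eq[THEN iffD1, rotated -1])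
       (use \<open>R \<le> t\<close> support in \<open>auto intro: negligible_subset[OF negligible_empty]\<close>)
  then show ?thesis
    by (rule integral_unique[symmetric])
qed

lemma has_vector_derivative_primitive: "0 < x \<Longrightarrow> (primitive has_vector_derivative f x) (at x)"
proof -
  assume "0 < x"
  then have "(primitive has_vector_derivative f x) (at x within {0..x + 1})"
    unfolding primitive_def[abs_def]
    by (intro integral_has_vector_derivative) (auto intro: continuous_on_subset[OF continuous_on_kernel])
  moreover have "at x within {0..x + 1} = at x"
    using \<open>0 < x\<close> by (intro at_within_interior) auto
  ultimately show ?thesis
    by simp
qed

lemma continuous_on_primitive: "continuous_on {0<..} primitive"
  using has_vector_derivative_primitive
  by (auto intro!: continuous_at_imp_continuous_on has_vector_derivative_continuous)

lemma norm_primitive_le: "0 \<le> t \<Longrightarrow> norm (primitive t) \<le> L * R * t"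
proof -
  assume "0 \<le> t"
  then have "(f has_integral primitive t) (cbox 0 t)"
    using integrable_integral[OF integrable_on_kernel[of 0 t]] by (simp add: primitive_def)
  then have "norm (primitive t) \<le> L * R * measure lborel (cbox 0 t)"
    by (rule has_integral_bound[rotated]) (use L_nonneg R_pos norm_kernel_le in auto)
  then show ?thesis
    using \<open>0 \<le> t\<close> by simp
qed

lemma mellin_integrable_kernel: "0 < Re s \<Longrightarrow> Re s < 1 \<Longrightarrow> mellin_integrable f s"
  by (rule mellin_integrable_if_bounded[where A = "L * R" and B = 0 and R = R])
     (use continuous_on_kernel R_pos norm_kernel_le support in \<open>auto intro: continuous_on_subset\<close>)

lemma mellin_integrable_primitive:
  assumes "0 < Re s" "Re s < 1"
  shows "mellin_integrable primitive (s - 1)"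
  unfolding mellin_integrable_divide_of_real[symmetric]
proof (rule mellin_integrable_if_bounded[where A = "L * R" and B = "norm (integral {0..} f)" and R = R])
  show "continuous_on {0<..} (\<lambda>x. primitive x / complex_of_real x)"
    by (intro continuous_intros continuous_on_primitive) auto
  fix x :: real assume "0 < x"
  then show "norm (primitive x / of_real x) \<le> (if x < R then L * R else norm (integral {0..} f) / x)"
    using norm_primitive_le[of x] by (simp add: primitive_eq_integral norm_divide divide_simps)
qed (use assms R_pos in auto)

lemma powr_mult_primitive_tendsto_0_at_right:
  assumes "0 < Re s"
  shows "((\<lambda>x. complex_of_real x powr (s - 1) * primitive x) \<longlongrightarrow> 0) (at_right 0)"
proof (rule Lim_null_comparison)
  show "eventually (\<lambda>x. norm (complex_of_real x powr (s - 1) * primitive x) \<le> L * R * x powr Re s) (at_right 0)"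
    using eventually_at_right_less[of "0::real"]
  proof eventually_elim
    case (elim x)
    have "norm (complex_of_real x powr (s - 1) * primitive x) \<le> x powr (Re s - 1) * (L * R * x)"
      using elim norm_primitive_le[of x] by (simp add: norm_mult norm_of_real_powr mult_left_mono)
    also have "\<dots> = L * R * x powr Re s"
      using elim by (simp add: powr_diff)
    finally show ?case .
  qed
  show "((\<lambda>x. L * R * x powr Re s) \<longlongrightarrow> 0) (at_right 0)"
    using assms by (intro tendsto_mult_right_zero tendsto_zero_powrI)
      (auto intro: tendsto_ident_at eventually_at_rightI[of 0 1])
qed

lemma powr_mult_primitive_tendsto_0_at_top:
  assumes "Re s < 1"
  shows "((\<lambda>x. complex_of_real x powr (s - 1) * primitive x) \<longlongrightarrow> 0) at_top"
proof (rule Lim_transform_eventually)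
  show "((\<lambda>x. complex_of_real x powr (s - 1) * integral {0..} f) \<longlongrightarrow> 0) at_top"
    using assms by (intro tendsto_mult_left_zero tendsto_neg_powr_complex_of_real) (auto simp: filterlim_ident)
  show "eventually (\<lambda>x. complex_of_real x powr (s - 1) * integral {0..} f
      = complex_of_real x powr (s - 1) * primitive x) at_top"
    using eventually_ge_at_top[of R] by eventually_elim (simp add: primitive_eq_integral)
qed

lemma mellin_primitive:
  assumes s: "0 < Re s" "Re s < 1"
  shows "mellin primitive (s - 1) = mellin f s / (1 - s)"
proof -
  define g where "g x = (s - 1) * (complex_of_real x powr (s - 2) * primitive x)
    + complex_of_real x powr (s - 1) * f x" for x
  have "integral {0<..} g = 0"
  proof (rule integral_deriv_eq_0_if_vanishing_at_0_and_infinity[OF _ _ _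
      powr_mult_primitive_tendsto_0_at_right[OF s(1)] powr_mult_primitive_tendsto_0_at_top[OF s(2)]])
    show "g absolutely_integrable_on {0<..}"
      using mellin_integrable_primitive[OF s] mellin_integrable_kernel[OF s]
      unfolding g_def[abs_def] mellin_integrable_def
      by (intro set_integral_add(1) set_integrable_mult_right) simp_all
    fix x :: real assume "0 < x"
    have "((\<lambda>x. complex_of_real x powr (s - 1) * primitive x) has_vector_derivative
        of_real x powr (s - 1) * f x + ((s - 1) * of_real x powr (s - 1 - 1)) * primitive x) (at x)"
      by (rule has_vector_derivative_mult[OF has_vector_derivative_of_real_powr[OF \<open>0 < x\<close>]
          has_vector_derivative_primitive[OF \<open>0 < x\<close>]])
    moreover have "s - 1 - 1 = s - 2"
      by simp
    ultimately show "((\<lambda>x. complex_of_real x powr (s - 1) * primitive x) has_vector_derivative g x) (at x)"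
      unfolding g_def by (simp add: algebra_simps)
    show "isCont g x"
      using \<open>0 < x\<close> isCont_kernel has_vector_derivative_primitive[THEN has_vector_derivative_continuous]
      unfolding g_def by (intro continuous_intros) auto
  qed
  moreover have "integral {0<..} g = (s - 1) * mellin primitive (s - 1) + mellin f s"
  proof -
    have "(\<lambda>x. complex_of_real x powr (s - 2) * primitive x) integrable_on {0<..}"
      using mellin_integrable_integrable[OF mellin_integrable_primitive[OF s]] by simp
    then have "(\<lambda>x. (s - 1) * (complex_of_real x powr (s - 2) * primitive x)) integrable_on {0<..}"
      by (rule integrable_on_mult_right)
    from integral_add[OF this mellin_integrable_integrable[OF mellin_integrable_kernel[OF s]]]
    show ?thesis
      by (simp add: g_def[abs_def] mellin_def)
  qed
  moreover have "1 - s \<noteq> 0"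
    using s by auto
  ultimately show ?thesis
    by (simp add: field_simps)
qed

(* The correction F(Nx)/x has Mellin transform N^(1-s) mellin f s / (1 - s), which cancels the
   divergence of sum_{n<=N} n^-s for Re s < 1. *)
definition muntz_partial :: "nat \<Rightarrow> real \<Rightarrow> complex" where
  "muntz_partial N x = (\<Sum>n=1..N. f (real n * x)) - primitive (real N * x) / of_real x"

lemma
  assumes s: "0 < Re s" "Re s < 1"
  shows mellin_integrable_muntz_partial: "mellin_integrable (muntz_partial N) s"
    and mellin_muntz_partial: "mellin (muntz_partial N) s
      = mellin f s * ((\<Sum>n=1..N. 1 / of_nat n powr s) - of_nat N powr (1 - s) / (1 - s))"
proof -
  have dilates: "mellin_integrable (\<lambda>x. f (real n * x)) s"
      "mellin (\<lambda>x. f (real n * x)) s = mellin f s / of_nat n powr s" if "0 < n" for n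
    using that mellin_integrable_dilation[OF mellin_integrable_kernel[OF s]]
      mellin_dilation[OF mellin_integrable_kernel[OF s]] by auto
  have sum: "mellin_integrable (\<lambda>x. \<Sum>n=1..N. f (real n * x)) s"
    by (intro mellin_integrable_sum dilates) auto
  have "mellin (\<lambda>x. \<Sum>n=1..N. f (real n * x)) s = (\<Sum>n=1..N. mellin f s / of_nat n powr s)"
    by (subst mellin_sum) (auto intro!: sum.cong simp: dilates)
  then have sum_eq: "mellin (\<lambda>x. \<Sum>n=1..N. f (real n * x)) s = mellin f s * (\<Sum>n=1..N. 1 / of_nat n powr s)"
    by (simp add: sum_distrib_left)
  have "mellin_integrable (muntz_partial N) s \<and>
    mellin (muntz_partial N) s = mellin f s * ((\<Sum>n=1..N. 1 / of_nat n powr s) - of_nat N powr (1 - s) / (1 - s))"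
  proof (cases "N = 0")
    case True
    then have "muntz_partial N = (\<lambda>x. 0)"
      by (simp add: muntz_partial_def[abs_def])
    with True show ?thesis
      by (simp add: mellin_integrable_def mellin_def)
  next
    case False
    have primitive_s: "mellin_integrable primitive (s - 1)"
      by (rule mellin_integrable_primitive[OF s])
    have tail: "mellin_integrable (\<lambda>x. primitive (real N * x) / of_real x) s"
        "mellin (\<lambda>x. primitive (real N * x) / of_real x) s = mellin f s * (of_nat N powr (1 - s) / (1 - s))"
      using False mellin_integrable_dilation[OF primitive_s] mellin_dilation[OF primitive_s]
      by (simp_all add: mellin_integrable_divide_of_real mellin_divide_of_real mellin_primitive[OF s] powr_diff)
    have "mellin_integrable (muntz_partial N) s"
      unfolding muntz_partial_def[abs_def] by (rule mellin_integrable_diff[OF sum tail(1)])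
    moreover have "mellin (muntz_partial N) s
        = mellin f s * ((\<Sum>n=1..N. 1 / of_nat n powr s) - of_nat N powr (1 - s) / (1 - s))"
      unfolding muntz_partial_def[abs_def] mellin_diff[OF sum tail(1)] sum_eq tail(2)
      by (simp add: algebra_simps)
    ultimately show ?thesis ..
  qed
  then show "mellin_integrable (muntz_partial N) s"
    "mellin (muntz_partial N) s = mellin f s * ((\<Sum>n=1..N. 1 / of_nat n powr s) - of_nat N powr (1 - s) / (1 - s))"
    by blast+
qed

lemma muntz_eq_sum:
  assumes "0 < x" "R \<le> real N * x"
  shows "muntz f x = (\<Sum>n=1..N. f (real n * x)) - integral {0..} f / of_real x"
proof -
  have "(\<Sum>n. f (real (Suc n) * x)) = (\<Sum>n<N. f (real (Suc n) * x))"
  proof (rule suminf_finite)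
    fix n assume "n \<notin> {..<N}"
    then have "real N * x \<le> real (Suc n) * x"
      using assms(1) by (simp add: mult_right_mono)
    then show "f (real (Suc n) * x) = 0"
      using assms(2) by (simp add: support)
  qed simp
  also have "\<dots> = (\<Sum>n=1..N. f (real n * x))"
    by (simp add: sum.atLeast1_atMost_eq)
  finally show ?thesis
    by (simp add: muntz_def divide_inverse mult.commute)
qed

lemma muntz_partial_eventually_eq:
  assumes "0 < x"
  shows "eventually (\<lambda>N. muntz_partial N x = muntz f x) sequentially"
proof -
  have "eventually (\<lambda>N. R / x \<le> real N) sequentially"
    using filterlim_real_sequentially by (simp add: filterlim_at_top)
  then show ?thesis
  proof eventually_elim
    case (elim N)
    then have "R \<le> real N * x"
      using assms by (simp add: pos_divide_le_eq)
    then show ?case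
      using assms by (simp add: muntz_partial_def muntz_eq_sum primitive_eq_integral)
  qed
qed

lemma muntz_partial_telescope:
  "muntz_partial N x = (\<Sum>n=1..N. f (real n * x) - (primitive (real n * x) - primitive ((real n - 1) * x)) / of_real x)"
proof (induction N)
  case (Suc N)
  then show ?case
    by (simp add: muntz_partial_def diff_divide_distrib algebra_simps)
qed (simp add: muntz_partial_def)

lemma norm_increment_le:
  assumes "0 \<le> a" "0 < h"
  shows "norm (f (a + h) - (primitive (a + h) - primitive a) / of_real h) \<le> L * h"
proof -
  have "((\<lambda>t. f (a + h) - f t) has_integral h *\<^sub>R f (a + h) - (primitive (a + h) - primitive a)) (cbox a (a + h))"
    using has_integral_const_real[of "f (a + h)" a "a + h"] assms
    by (auto intro!: has_integral_diff integrable_integral integrable_on_kernel simp: primitive_diff)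
  then have "norm (h *\<^sub>R f (a + h) - (primitive (a + h) - primitive a)) \<le> L * h * measure lborel (cbox a (a + h))"
  proof (rule has_integral_bound[rotated])
    fix t assume "t \<in> cbox a (a + h)"
    then have "norm (f (a + h) - f t) \<le> L * norm (a + h - t)"
      using assms by (intro lipschitz_on_normD[OF lipschitz]) auto
    also have "\<dots> \<le> L * h"
      using \<open>t \<in> cbox a (a + h)\<close> L_nonneg by (intro mult_left_mono) auto
    finally show "norm (f (a + h) - f t) \<le> L * h" .
  qed (use assms L_nonneg in simp)
  moreover have "f (a + h) - (primitive (a + h) - primitive a) / of_real h
      = (h *\<^sub>R f (a + h) - (primitive (a + h) - primitive a)) / of_real h"
    using assms by (simp add: scaleR_conv_of_real diff_divide_distrib)
  ultimately show ?thesis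
    using assms by (simp add: norm_divide pos_divide_le_eq)
qed

lemma norm_muntz_partial_term_le:
  assumes "0 < x" "1 \<le> n"
  shows "norm (f (real n * x) - (primitive (real n * x) - primitive ((real n - 1) * x)) / of_real x)
    \<le> (if (real n - 1) * x < R then L * x else 0)"
proof -
  define a where "a = (real n - 1) * x"
  have "real n * x = a + x"
    by (simp add: a_def algebra_simps)
  moreover have "norm (f (a + x) - (primitive (a + x) - primitive a) / of_real x) \<le> (if a < R then L * x else 0)"
  proof (cases "a < R")
    case True
    then show ?thesis
      using assms by (simp add: norm_increment_le a_def)
  next
    case False
    then show ?thesis
      using assms by (simp add: support primitive_eq_integral)
  qed
  ultimately show ?thesis
    by (simp add: a_def)
qed

lemma norm_muntz_partial_le_near_0:
  assumes "0 < x" "x < R"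
  shows "norm (muntz_partial N x) \<le> 2 * L * R"
proof -
  define S where "S = {n\<in>{1..N}. (real n - 1) * x < R}"
  have "norm (muntz_partial N x) \<le> (\<Sum>n=1..N. if (real n - 1) * x < R then L * x else 0)"
    unfolding muntz_partial_telescope
    by (rule sum_norm_le) (use assms norm_muntz_partial_term_le in auto)
  also have "\<dots> = real (card S) * (L * x)"
    by (simp add: sum.If_cases S_def Int_def)
  also have "\<dots> \<le> (R / x + 1) * (L * x)"
    using card_le_divide_add_one[OF assms(1) R_pos, of N] L_nonneg assms
    by (intro mult_right_mono) (auto simp: S_def)
  also have "\<dots> = L * (R + x)"
    using assms by (simp add: field_simps)
  also have "\<dots> \<le> 2 * L * R"
    using mult_left_mono[of "R + x" "2 * R" L] assms L_nonneg by linarith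
  finally show ?thesis .
qed

lemma norm_muntz_partial_le_beyond_support:
  assumes "R \<le> x"
  shows "norm (muntz_partial N x) \<le> norm (integral {0..} f) / x"
proof -
  have beyond: "R \<le> real n * x" if "1 \<le> n" for n
    using that assms R_pos order_trans[OF assms, of "real n * x"] by simp
  then have "f (real n * x) = 0" if "n \<in> {1..N}" for n
    using that by (simp add: support)
  then have "muntz_partial N x = - primitive (real N * x) / of_real x"
    by (simp add: muntz_partial_def)
  moreover have "norm (primitive (real N * x)) \<le> norm (integral {0..} f)"
    using beyond[of N] by (cases "N = 0") (simp_all add: primitive_eq_integral)
  ultimately show ?thesis
    using assms R_pos by (simp add: norm_divide divide_right_mono)
qed

lemma
  assumes s: "0 < Re s" "Re s < 1"
  shows mellin_integrable_muntz: "mellin_integrable (muntz f) s"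
    and mellin_muntz_partial_tendsto: "(\<lambda>N. mellin (muntz_partial N) s) \<longlonglongrightarrow> mellin (muntz f) s"
proof -
  define majorant where
    "majorant x = x powr (Re s - 1) * (if x < R then 2 * L * R else norm (integral {0..} f) / x)" for x
  have majorant: "majorant integrable_on {0<..}"
    unfolding majorant_def[abs_def] by (rule integrable_powr_majorant) (use s R_pos in auto)
  have partial: "(\<lambda>x. complex_of_real x powr (s - 1) * muntz_partial N x) integrable_on {0<..}" for N
    by (rule mellin_integrable_integrable[OF mellin_integrable_muntz_partial[OF s]])
  have bound: "norm (complex_of_real x powr (s - 1) * muntz_partial N x) \<le> majorant x" if "x \<in> {0<..}" for N x
  proof -
    have "norm (muntz_partial N x) \<le> (if x < R then 2 * L * R else norm (integral {0..} f) / x)"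
      using that norm_muntz_partial_le_near_0[of x N] norm_muntz_partial_le_beyond_support[of x N] by auto
    then have "x powr (Re s - 1) * norm (muntz_partial N x) \<le> majorant x"
      unfolding majorant_def by (rule mult_left_mono) simp
    then show ?thesis
      using that by (simp add: norm_mult norm_of_real_powr)
  qed
  have limit: "(\<lambda>N. complex_of_real x powr (s - 1) * muntz_partial N x)
      \<longlonglongrightarrow> complex_of_real x powr (s - 1) * muntz f x" if "x \<in> {0<..}" for x
    using that muntz_partial_eventually_eq[of x]
    by (intro tendsto_eventually) (auto elim: eventually_mono)
  have "(\<lambda>x. complex_of_real x powr (s - 1) * muntz f x) integrable_on {0<..}"
    by (rule dominated_convergence(1)[OF partial majorant bound limit])
  then show "mellin_integrable (muntz f) s"
    unfolding mellin_integrable_def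
  proof (rule absolutely_integrable_integrable_bound[rotated])
    fix x :: real assume "x \<in> {0<..}"
    show "norm (complex_of_real x powr (s - 1) * muntz f x) \<le> majorant x"
      by (rule Lim_norm_ubound[OF _ limit[OF \<open>x \<in> {0<..}\<close>]]) (use bound \<open>x \<in> {0<..}\<close> in auto)
  qed (rule majorant)
  show "(\<lambda>N. mellin (muntz_partial N) s) \<longlonglongrightarrow> mellin (muntz f) s"
    unfolding mellin_def by (rule dominated_convergence(2)[OF partial majorant bound limit])
qed

theorem mellin_muntz:
  assumes s: "0 < Re s" "Re s < 1"
  shows "mellin (muntz f) s = zeta s * mellin f s"
proof (cases "mellin f s = 0")
  case True
  then have "(\<lambda>N. 0) \<longlonglongrightarrow> mellin (muntz f) s"
    using mellin_muntz_partial_tendsto[OF s] by (simp add: mellin_muntz_partial[OF s])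
  then show ?thesis
    using True LIMSEQ_unique tendsto_const by auto
next
  case False
  have "(\<lambda>N. mellin (muntz_partial N) s / mellin f s) \<longlonglongrightarrow> mellin (muntz f) s / mellin f s"
    by (intro tendsto_divide mellin_muntz_partial_tendsto[OF s] tendsto_const False)
  then have "(\<lambda>N. (\<Sum>n=1..N. 1 / of_nat n powr s) - of_nat N powr (1 - s) / (1 - s))
      \<longlonglongrightarrow> mellin (muntz f) s / mellin f s"
    using False by (simp add: mellin_muntz_partial[OF s])
  then have "zeta s = mellin (muntz f) s / mellin f s"
    by (rule zeta_eq_lim[OF s])
  then show ?thesis
    using False by simp
qed

lemma Bspan_muntz_tail:
  assumes "h \<in> Bspan (muntz f)"
  obtains C where "\<And>x. R \<le> x \<Longrightarrow> h x = C / of_real x"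
proof -
  from assms obtain N c where h: "h = (\<lambda>x. \<Sum>n\<in>{1..N}. c n * muntz f (real n * x))"
    unfolding Bspan_def dil_def by blast
  have "h x = (\<Sum>n\<in>{1..N}. - c n * integral {0..} f / of_nat n) / of_real x" if "R \<le> x" for x
  proof -
    have "muntz f (real n * x) = - integral {0..} f / (of_nat n * of_real x)" if "n \<in> {1..N}" for n
    proof -
      have "x \<le> real n * x"
        using that \<open>R \<le> x\<close> R_pos by simp
      then have "R \<le> real n * x"
        using \<open>R \<le> x\<close> by simp
      then show ?thesis
        using R_pos muntz_eq_sum[of "real n * x" 1] by (simp add: support)
    qed
    then show ?thesis
      unfolding h by (simp add: sum_divide_distrib)
  qed
  then show ?thesis
    by (rule that)
qed

theorem mellin_eq_0_if_in_L2_closure: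
  assumes s: "1/2 < Re s" "Re s < 1" and "zeta s = 0"
    and closure: "in_L2_closure f (Bspan (muntz f))"
  shows "mellin f s = 0"
proof -
  define Q where "Q = (R powr (2 * Re s - 1) / (2 * Re s - 1) + R * (R powr (Re s - 1) / (1 - Re s))\<^sup>2) / 2"
  have s0: "0 < Re s"
    using s by simp
  have "norm (mellin f s) \<le> d * Q + e / d" if "0 < d" "0 < e" for d e
  proof -
    from closure \<open>0 < e\<close> obtain h where h: "h \<in> Bspan (muntz f)"
      and square: "(\<lambda>x. (norm (f x - h x))\<^sup>2) integrable_on {0<..}"
      and small: "integral {0<..} (\<lambda>x. (norm (f x - h x))\<^sup>2) < e"
      unfolding in_L2_closure_def by blast
    obtain C where C: "\<And>x. R \<le> x \<Longrightarrow> h x = C / of_real x"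
      using Bspan_muntz_tail[OF h] by blast
    have f: "mellin_integrable f s" and h_int: "mellin_integrable h s"
      using mellin_integrable_kernel[OF s0 s(2)] mellin_integrable_muntz[OF s0 s(2)]
      by (auto intro: mellin_integrable_Bspan h)
    have "mellin h s = 0"
      using mellin_integrable_muntz[OF s0 s(2)] h
      by (rule mellin_Bspan_eq_0) (simp add: mellin_muntz[OF s0 s(2)] \<open>zeta s = 0\<close>)
    then have "mellin f s = mellin (\<lambda>x. f x - h x) s"
      by (simp add: mellin_diff[OF f h_int])
    also have "norm \<dots> \<le> d * Q + integral {0<..} (\<lambda>x. (norm (f x - h x))\<^sup>2) / d"
      unfolding Q_def
      by (rule norm_mellin_le_L2[where C = "- C"])
         (use mellin_integrable_diff[OF f h_int] s R_pos C support square \<open>0 < d\<close> in auto)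
    also have "\<dots> \<le> d * Q + e / d"
      using small \<open>0 < d\<close> by (simp add: divide_right_mono)
    finally show ?thesis .
  qed
  then have "norm (mellin f s) \<le> 0"
    by (rule nonpos_if_le_mult_add_divide[rotated])
       (use s R_pos in \<open>auto simp: Q_def intro!: divide_nonneg_nonneg add_nonneg_nonneg\<close>)
  then show ?thesis
    by simp
qed

end

section \<open>Good kernels\<close>

lemma lipschitz_on_extend_zero:
  fixes f :: "real \<Rightarrow> 'a::real_normed_vector"
  assumes lipschitz: "L-lipschitz_on {a..b} f" and zero: "\<And>x. b \<le> x \<Longrightarrow> f x = 0"
  shows "L-lipschitz_on {a..} f"
proof (rule lipschitz_on_leI)
  fix x y :: real assume xy: "x \<in> {a..}" "y \<in> {a..}" "x \<le> y"
  consider "y \<le> b" | "b \<le> x" | "x < b" "b < y"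
    by linarith
  then show "dist (f x) (f y) \<le> L * dist x y"
  proof cases
    case 1
    then show ?thesis
      using xy by (intro lipschitz_onD[OF lipschitz]) auto
  next
    case 2
    then show ?thesis
      using xy zero lipschitz_on_nonneg[OF lipschitz] by simp
  next
    case 3
    then have "dist (f x) (f y) = dist (f x) (f b)"
      using zero by simp
    also have "\<dots> \<le> L * dist x b"
      using xy 3 by (intro lipschitz_onD[OF lipschitz]) auto
    also have "\<dots> \<le> L * dist x y"
      using 3 lipschitz_on_nonneg[OF lipschitz] by (intro mult_left_mono) (auto simp: dist_real_def)
    finally show ?thesis .
  qed
qed (rule lipschitz_on_nonneg[OF lipschitz])

lemma good_kernel_lipschitz_on:
  assumes "good_kernel f" and zero: "\<And>x. R \<le> x \<Longrightarrow> f x = 0"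
  obtains L where "L-lipschitz_on {0..} f"
proof -
  from assms(1) obtain f' where deriv: "\<And>x. 0 \<le> x \<Longrightarrow> (f has_vector_derivative f' x) (at x within {0..})"
    and cont: "continuous_on {0..} f'"
    unfolding good_kernel_def by blast
  have "compact (f' ` {0..R})"
    by (rule compact_continuous_image) (auto intro: continuous_on_subset[OF cont])
  then obtain B where "0 < B" "\<forall>y\<in>f' ` {0..R}. norm y \<le> B"
    using compact_imp_bounded bounded_pos by blast
  then have B: "0 \<le> B" "\<And>x. x \<in> {0..R} \<Longrightarrow> norm (f' x) \<le> B"
    by auto
  have "B-lipschitz_on {0..R} f"
  proof (rule bounded_derivative_imp_lipschitz[where f' = "\<lambda>x h. h *\<^sub>R f' x"])
    fix x assume "x \<in> {0..R}"
    then show "(f has_derivative (\<lambda>h. h *\<^sub>R f' x)) (at x within {0..R})"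
      using deriv[of x] by (auto simp: has_vector_derivative_def intro: has_derivative_subset)
    show "onorm (\<lambda>h. h *\<^sub>R f' x) \<le> B"
      using B(2)[OF \<open>x \<in> {0..R}\<close>] by (simp add: onorm_scaleR_left[OF bounded_linear_ident] onorm_id)
  qed (use B in auto)
  then show ?thesis
    by (rule that[OF lipschitz_on_extend_zero[OF _ zero]])
qed

theorem mainTheorem2:
  fixes f :: "real \<Rightarrow> complex"
  assumes "good_kernel f"
    and "\<exists>R. \<forall>x>R. f x = 0"
    and "in_L2_closure f (Bspan (muntz f))"
  shows "{s. zeta s = 0 \<and> 1/2 < Re s \<and> Re s < 1} \<subseteq> {s. mellin f s = 0 \<and> 1/2 < Re s \<and> Re s < 1}"
proof
  fix s assume "s \<in> {s. zeta s = 0 \<and> 1/2 < Re s \<and> Re s < 1}"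
  then have s: "zeta s = 0" "1/2 < Re s" "Re s < 1"
    by auto
  from assms(2) obtain R0 where "\<forall>x>R0. f x = 0"
    by blast
  then have support: "\<And>x. max 1 (R0 + 1) \<le> x \<Longrightarrow> f x = 0"
    by auto
  obtain L where "L-lipschitz_on {0..} f"
    using good_kernel_lipschitz_on[OF assms(1) support] .
  then interpret compact_lipschitz_kernel f L "max 1 (R0 + 1)"
    by unfold_locales (use support in auto)
  have "mellin f s = 0"
    by (rule mellin_eq_0_if_in_L2_closure) (use s assms(3) in auto)
  with s show "s \<in> {s. mellin f s = 0 \<and> 1/2 < Re s \<and> Re s < 1}"
    by simp
qed

end
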